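(* Let $1\le p<\infty$ and consider $\ell_p$ as a Banach algebra under coordinatewise multiplication. Let $w=(w(n))_{n\ge2}$ be a bounded sequence of non-zero complex numbers and $B_w(x(1),x(2),x(3),\ldots)=(w(2)x(2),w(3)x(3),w(4)x(4),\ldots)$ the weighted backward shift on $\ell_p$. Assume that $|w(n)|\ge1$ for all $n\ge2$ and that, for some integer $m\ge2$, $\sum_{n=2}^\infty\frac{1}{|w(2)w(3)\cdots w(n)|^{p/m}}=\infty$. Then for any $x\in\ell_p$, $x^m$ is not frequently hypercyclic for $B_w$. In particular, $B_w$ does not have any frequently hypercyclic algebra.
   Context: A vector $x$ is frequently hypercyclic for $T$ if for every non-empty open $U$ the set $\{n\in\mathbb N_0:T^nx\in U\}$ has positive lower density $\liminf_{N\to\infty}\frac{\mathrm{card}(A\cap[0,N])}{N+1}$. A frequently hypercyclic algebra is a subalgebra $\ne\{0\}$ all of whose non-zero elements are frequently hypercyclic. Powers are coordinatewise. *)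

theory Defs
  imports "HOL-Analysis.Analysis"
begin

text \<open>Sequences are indexed from 0: the Isabelle sequence x corresponds to the paper's
  (x(1), x(2), ...) via x i = x(i+1). Weights keep the paper's indexing w n, n >= 2.\<close>

definition lp :: "real \<Rightarrow> (nat \<Rightarrow> complex) set" where
  "lp p = {x. summable (\<lambda>i. cmod (x i) powr p)}"

definition lp_norm :: "real \<Rightarrow> (nat \<Rightarrow> complex) \<Rightarrow> real" where
  "lp_norm p x = (\<Sum>i. cmod (x i) powr p) powr (1 / p)"

definition lp_open :: "real \<Rightarrow> (nat \<Rightarrow> complex) set \<Rightarrow> bool" where
  "lp_open p U \<longleftrightarrow> U \<subseteq> lp p \<and>
     (\<forall>y\<in>U. \<exists>e>0. \<forall>z\<in>lp p. lp_norm p (\<lambda>i. z i - y i) < e \<longrightarrow> z \<in> U)"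

text \<open>Weighted backward shift: (B_w x)(n) = w(n+1) x(n+1) in the paper's indexing.\<close>
definition bshift :: "(nat \<Rightarrow> complex) \<Rightarrow> (nat \<Rightarrow> complex) \<Rightarrow> (nat \<Rightarrow> complex)" where
  "bshift w x = (\<lambda>i. w (i + 2) * x (i + 1))"

definition lower_density :: "nat set \<Rightarrow> ereal" where
  "lower_density A = liminf (\<lambda>N. ereal (real (card (A \<inter> {0..N})) / real (N + 1)))"

definition freq_hypercyclic ::
  "real \<Rightarrow> ((nat \<Rightarrow> complex) \<Rightarrow> (nat \<Rightarrow> complex)) \<Rightarrow> (nat \<Rightarrow> complex) \<Rightarrow> bool" where
  "freq_hypercyclic p T x \<longleftrightarrow> x \<in> lp p \<and>
     (\<forall>U. lp_open p U \<and> U \<noteq> {} \<longrightarrow> lower_density {n. (T ^^ n) x \<in> U} > 0)"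

definition lp_subalgebra :: "real \<Rightarrow> (nat \<Rightarrow> complex) set \<Rightarrow> bool" where
  "lp_subalgebra p A \<longleftrightarrow> A \<subseteq> lp p \<and> (\<lambda>i. 0) \<in> A \<and>
     (\<forall>x\<in>A. \<forall>y\<in>A. (\<lambda>i. x i + y i) \<in> A \<and> (\<lambda>i. x i * y i) \<in> A) \<and>
     (\<forall>c::complex. \<forall>x\<in>A. (\<lambda>i. c * x i) \<in> A)"

definition freq_hypercyclic_algebra ::
  "real \<Rightarrow> ((nat \<Rightarrow> complex) \<Rightarrow> (nat \<Rightarrow> complex)) \<Rightarrow> (nat \<Rightarrow> complex) set \<Rightarrow> bool" where
  "freq_hypercyclic_algebra p T A \<longleftrightarrow> lp_subalgebra p A \<and> A \<noteq> {\<lambda>i. 0} \<and>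
     (\<forall>x\<in>A. x \<noteq> (\<lambda>i. 0) \<longrightarrow> freq_hypercyclic p T x)"

end

theory Submission
  imports Defs
begin

(* The first coordinate of B_w^n (x^m) is w(2)...w(n+1) x(n+1)^m. Whenever it lies within 1/2 of 1,
   |x(n+1)|^p >= (1/2)^(p/m) |w(2)...w(n+1)|^(-p/m). Frequent hypercyclicity of x^m makes this happen
   for a set of n of positive lower density. The right-hand sides decrease in n, and by Abel summation
   the sum of a decreasing nonnegative sequence over a set of positive lower density dominates a fixed
   multiple of its full sum, up to a constant. So the divergent series would be bounded by the sum of
   the |x(n)|^p. An algebra contains the m-th powers of its elements, which gives the second claim. *)

lemma lower_density_pos_imp_card_ge:
  assumes "lower_density A > 0"
  obtains \<delta> N0 where "\<delta> > 0" "\<And>N. N \<ge> N0 \<Longrightarrow> \<delta> * (real N + 1) \<le> real (card (A \<inter> {..N}))"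
proof -
  obtain \<delta> where \<delta>: "0 < ereal \<delta>" "ereal \<delta> < lower_density A"
    using assms ereal_dense2 by blast
  then have "\<forall>\<^sub>F N in sequentially. \<delta> < real (card (A \<inter> {0..N})) / real (N + 1)"
    using less_LiminfD[OF \<delta>(2)[unfolded lower_density_def]] by simp
  then obtain N0 where "\<And>N. N \<ge> N0 \<Longrightarrow> \<delta> < real (card (A \<inter> {..N})) / (real N + 1)"
    unfolding eventually_sequentially atLeast0AtMost by (auto simp: add.commute)
  then show ?thesis
    using that[of \<delta> N0] \<delta>(1) by (simp add: pos_less_divide_eq less_imp_le)
qed

(* Abel summation of the sum of a over A against \<delta> times its full sum: passing from N to N + 1
   changes the remainder by the surplus card (A \<inter> {..N}) - \<delta> (N + 1) times a N - a (N + 1). *)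
definition abel_remainder :: "nat set \<Rightarrow> real \<Rightarrow> (nat \<Rightarrow> real) \<Rightarrow> nat \<Rightarrow> real" where
  "abel_remainder A \<delta> a N = (\<Sum>n\<in>A \<inter> {..N}. a n) - \<delta> * (\<Sum>n\<le>N. a n)
     - (real (card (A \<inter> {..N})) - \<delta> * (real N + 1)) * a N"

lemma abel_remainder_mono:
  fixes a :: "nat \<Rightarrow> real"
  assumes "decseq a" and dense: "\<And>N. N \<ge> N0 \<Longrightarrow> \<delta> * (real N + 1) \<le> real (card (A \<inter> {..N}))"
    and "N0 \<le> N"
  shows "abel_remainder A \<delta> a N0 \<le> abel_remainder A \<delta> a N"
  using \<open>N0 \<le> N\<close>
proof (induction rule: dec_induct)
  case (step N)
  define surplus where "surplus = real (card (A \<inter> {..N})) - \<delta> * (real N + 1)"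
  have "surplus * a (Suc N) \<le> surplus * a N"
    using \<open>decseq a\<close> dense[OF step.hyps(1)]
    by (intro mult_left_mono) (auto simp: surplus_def decseq_Suc_iff)
  moreover have "A \<inter> {..Suc N} = (if Suc N \<in> A then insert (Suc N) (A \<inter> {..N}) else A \<inter> {..N})"
    by (auto simp: atMost_Suc)
  ultimately have "abel_remainder A \<delta> a N \<le> abel_remainder A \<delta> a (Suc N)"
    unfolding abel_remainder_def surplus_def by (auto simp: algebra_simps)
  then show ?case
    using step.IH by linarith
qed simp

lemma summable_if_summable_on_positive_density:
  fixes a :: "nat \<Rightarrow> real" and A :: "nat set"
  assumes nonneg: "\<And>n. 0 \<le> a n" and "decseq a" and "lower_density A > 0"
    and summable_on_A: "summable (\<lambda>n. if n \<in> A then a n else 0)"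
  shows "summable a"
proof -
  obtain \<delta> N0 where "\<delta> > 0" and dense: "\<And>N. N \<ge> N0 \<Longrightarrow> \<delta> * (real N + 1) \<le> real (card (A \<inter> {..N}))"
    using lower_density_pos_imp_card_ge[OF \<open>lower_density A > 0\<close>] by blast
  define g where "g = abel_remainder A \<delta> a"
  define K where "K = (\<Sum>n. if n \<in> A then a n else 0)"
  have g_mono: "g N0 \<le> g N" if "N0 \<le> N" for N
    unfolding g_def using abel_remainder_mono \<open>decseq a\<close> dense that by blast
  have sum_on_A_le: "(\<Sum>n\<in>A \<inter> {..N}. a n) \<le> K" for N
  proof -
    have "(\<Sum>n\<in>A \<inter> {..N}. a n) = (\<Sum>n\<le>N. if n \<in> A then a n else 0)"
      using sum.inter_restrict[of "{..N}" a A] by (simp add: Int_commute)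
    also have "\<dots> \<le> K"
      unfolding K_def by (rule sum_le_suminf[OF summable_on_A]) (auto simp: nonneg)
    finally show ?thesis .
  qed
  have "(\<Sum>n\<le>N. a n) \<le> (K - g N0) / \<delta>" for N
  proof -
    have "(\<Sum>n\<le>N. a n) \<le> (\<Sum>n\<le>N + N0. a n)"
      by (rule sum_mono2) (auto simp: nonneg)
    also have "\<delta> * (\<Sum>n\<le>N + N0. a n) \<le> K - g N0"
    proof -
      have "0 \<le> (real (card (A \<inter> {..N + N0})) - \<delta> * (real (N + N0) + 1)) * a (N + N0)"
        using dense[of "N + N0"] nonneg by simp
      then show ?thesis
        using g_mono[of "N + N0"] sum_on_A_le[of "N + N0"]
        unfolding g_def abel_remainder_def by simp
    qed
    then have "(\<Sum>n\<le>N + N0. a n) \<le> (K - g N0) / \<delta>"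
      using \<open>\<delta> > 0\<close> by (simp add: pos_le_divide_eq mult.commute)
    finally show ?thesis .
  qed
  then show ?thesis
    using bounded_imp_summable nonneg by blast
qed

lemma lp_diff:
  assumes "y \<in> lp p" "z \<in> lp p" "0 \<le> p"
  shows "(\<lambda>i. z i - y i) \<in> lp p"
proof -
  have bound: "cmod (z i - y i) powr p \<le> 2 powr p * (cmod (z i) powr p + cmod (y i) powr p)" for i
  proof -
    have "cmod (z i - y i) \<le> 2 * max (cmod (z i)) (cmod (y i))"
      using norm_triangle_ineq4[of "z i" "y i"] by linarith
    then have "cmod (z i - y i) powr p \<le> (2 * max (cmod (z i)) (cmod (y i))) powr p"
      using \<open>0 \<le> p\<close> by (intro powr_mono2) auto
    also have "\<dots> = 2 powr p * max (cmod (z i)) (cmod (y i)) powr p"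
      by (simp add: powr_mult)
    also have "\<dots> \<le> 2 powr p * (cmod (z i) powr p + cmod (y i) powr p)"
      by (intro mult_left_mono) (auto simp: max_def)
    finally show ?thesis .
  qed
  have dominant: "summable (\<lambda>i. 2 powr p * (cmod (z i) powr p + cmod (y i) powr p))"
    using assms(1,2) unfolding lp_def by (intro summable_mult summable_add) auto
  show ?thesis
    unfolding lp_def by (intro CollectI summable_comparison_test'[OF dominant]) (use bound in auto)
qed

lemma norm_le_lp_norm:
  assumes "v \<in> lp p" "0 < p"
  shows "cmod (v i) \<le> lp_norm p v"
proof -
  have "cmod (v i) powr p \<le> (\<Sum>j. cmod (v j) powr p)"
    using sum_le_suminf[of "\<lambda>j. cmod (v j) powr p" "{i}"] assms(1) unfolding lp_def by auto
  then have "(cmod (v i) powr p) powr (1/p) \<le> (\<Sum>j. cmod (v j) powr p) powr (1/p)"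
    using \<open>0 < p\<close> by (intro powr_mono2) auto
  then show ?thesis
    using \<open>0 < p\<close> unfolding lp_norm_def by (simp add: powr_powr)
qed

lemma lp_open_coordinate_ball:
  assumes "0 < p"
  shows "lp_open p {z \<in> lp p. cmod (z i - c) < r}"
  unfolding lp_open_def
proof (intro conjI ballI)
  fix y assume y: "y \<in> {z \<in> lp p. cmod (z i - c) < r}"
  show "\<exists>e>0. \<forall>z\<in>lp p. lp_norm p (\<lambda>i. z i - y i) < e \<longrightarrow> z \<in> {z \<in> lp p. cmod (z i - c) < r}"
  proof (intro exI[of _ "r - cmod (y i - c)"] conjI ballI impI)
    fix z assume z: "z \<in> lp p" and close: "lp_norm p (\<lambda>i. z i - y i) < r - cmod (y i - c)"
    have "cmod (z i - y i) \<le> lp_norm p (\<lambda>i. z i - y i)"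
      using norm_le_lp_norm[OF lp_diff[of y p z]] y z assms by simp
    moreover have "cmod (z i - c) \<le> cmod (z i - y i) + cmod (y i - c)"
      using norm_triangle_ineq[of "z i - y i" "y i - c"] by simp
    ultimately show "z \<in> {z \<in> lp p. cmod (z i - c) < r}"
      using z close by auto
  qed (use y in simp)
qed auto

lemma lp_coordinate_ball_nonempty:
  assumes "0 < r"
  shows "{z \<in> lp p. cmod (z i - c) < r} \<noteq> {}"
proof -
  have "summable (\<lambda>j. cmod (if j = i then c else 0) powr p)"
    by (rule summable_finite[of "{i}"]) auto
  then have "(\<lambda>j. if j = i then c else 0) \<in> {z \<in> lp p. cmod (z i - c) < r}"
    using assms unfolding lp_def by simp
  then show ?thesis by blast
qed

lemma bshift_funpow:
  "(bshift w ^^ n) y i = (\<Prod>k\<in>{i+2..i+n+1}. w k) * y (i + n)"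
proof (induction n arbitrary: i)
  case (Suc n)
  have "(bshift w ^^ Suc n) y i = w (i + 2) * (bshift w ^^ n) y (i + 1)"
    by (simp add: bshift_def)
  also have "\<dots> = w (i + 2) * ((\<Prod>k\<in>{Suc (i+2)..i+Suc n+1}. w k) * y (i + Suc n))"
    using Suc.IH[of "i + 1"] by simp
  also have "\<dots> = (\<Prod>k\<in>{i+2..i+Suc n+1}. w k) * y (i + Suc n)"
    by (subst prod.atLeast_Suc_atMost[of "i+2"]) (simp_all add: mult.assoc)
  finally show ?case .
qed simp

lemma decseq_inverse_powr_norm_prod:
  fixes w :: "nat \<Rightarrow> complex"
  assumes "\<forall>k\<ge>2. 1 \<le> cmod (w k)" and "0 \<le> q"
  shows "decseq (\<lambda>n. 1 / cmod (\<Prod>k\<in>{2..n+1}. w k) powr q)"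
proof (rule decseq_SucI)
  fix n
  have ge_1: "1 \<le> cmod (\<Prod>k\<in>{2..n+1}. w k)"
    unfolding prod_norm [symmetric] using assms(1) by (intro prod_ge_1) auto
  have "{2..Suc n + 1} = insert (n + 2) {2..n+1}" by auto
  then have "cmod (\<Prod>k\<in>{2..Suc n+1}. w k) = cmod (w (n + 2)) * cmod (\<Prod>k\<in>{2..n+1}. w k)"
    by (simp add: norm_mult)
  also have "\<dots> \<ge> cmod (\<Prod>k\<in>{2..n+1}. w k)"
    using assms(1) ge_1 by (simp add: mult_le_cancel_right1)
  finally have le: "cmod (\<Prod>k\<in>{2..n+1}. w k) powr q \<le> cmod (\<Prod>k\<in>{2..Suc n+1}. w k) powr q"
    using \<open>0 \<le> q\<close> by (intro powr_mono2) auto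
  have pos: "0 < cmod (\<Prod>k\<in>{2..n+1}. w k) powr q"
    using ge_1 by (subst powr_gt_zero) linarith
  show "1 / cmod (\<Prod>k\<in>{2..Suc n+1}. w k) powr q \<le> 1 / cmod (\<Prod>k\<in>{2..n+1}. w k) powr q"
    by (rule frac_le[OF zero_le_one order_refl pos le])
qed

lemma powr_lower_bound_if_power_near_one:
  fixes V t :: complex and p :: real
  assumes "cmod (V * t ^ m - 1) < 1/2" and "0 < m" and "0 \<le> p"
  shows "(1/2) powr (p / m) * (1 / cmod V powr (p / m)) \<le> cmod t powr p"
proof -
  have "1 \<le> cmod (V * t ^ m) + cmod (V * t ^ m - 1)"
    using norm_triangle_ineq4[of "V * t ^ m" "V * t ^ m - 1"] by simp
  then have large: "1/2 < cmod V * cmod t ^ m"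
    using assms(1) by (simp add: norm_mult norm_power)
  then have "V \<noteq> 0" and "t \<noteq> 0"
    using \<open>0 < m\<close> by (auto simp: power_0_left)
  have "1 / (2 * cmod V) < cmod t ^ m"
    using large \<open>V \<noteq> 0\<close> by (simp add: field_simps)
  then have "(1 / (2 * cmod V)) powr (p / m) \<le> (cmod t ^ m) powr (p / m)"
    using \<open>0 \<le> p\<close> by (intro powr_mono2) auto
  also have "(cmod t ^ m) powr (p / m) = cmod t powr p"
    using \<open>t \<noteq> 0\<close> \<open>0 < m\<close> by (simp add: powr_realpow [symmetric] powr_powr)
  finally show ?thesis
    by (simp add: powr_divide powr_mult)
qed

lemma power_not_freq_hypercyclic_bshift:
  fixes p :: real and w :: "nat \<Rightarrow> complex" and m :: nat
  assumes "1 \<le> p" and weights_ge_1: "\<forall>n\<ge>2. 1 \<le> cmod (w n)" and "0 < m"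
    and divergent: "\<not> summable (\<lambda>j. 1 / cmod (\<Prod>k\<in>{2..j+2}. w k) powr (p / real m))"
    and "x \<in> lp p"
  shows "\<not> freq_hypercyclic p (bshift w) (\<lambda>i. x i ^ m)"
proof
  assume fhc: "freq_hypercyclic p (bshift w) (\<lambda>i. x i ^ m)"
  define U where "U = {z \<in> lp p. cmod (z 0 - 1) < 1/2}"
  define A where "A = {n. (bshift w ^^ n) (\<lambda>i. x i ^ m) \<in> U}"
  define a where "a n = 1 / cmod (\<Prod>k\<in>{2..n+1}. w k) powr (p / m)" for n
  define c :: real where "c = (1/2) powr (p / m)"
  have "lower_density A > 0"
    using fhc lp_open_coordinate_ball[of p 0 1 "1/2"] lp_coordinate_ball_nonempty[of "1/2" p 0 1]
      \<open>1 \<le> p\<close> unfolding freq_hypercyclic_def A_def U_def by auto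
  have on_A: "c * a n \<le> cmod (x n) powr p" if "n \<in> A" for n
  proof -
    have "(bshift w ^^ n) (\<lambda>i. x i ^ m) 0 = (\<Prod>k\<in>{2..n+1}. w k) * x n ^ m"
      using bshift_funpow[where w = w and n = n and i = 0] by (simp only: add_0)
    then have "cmod ((\<Prod>k\<in>{2..n+1}. w k) * x n ^ m - 1) < 1/2"
      using that unfolding A_def U_def by simp
    then show ?thesis
      using powr_lower_bound_if_power_near_one \<open>0 < m\<close> \<open>1 \<le> p\<close>
      unfolding a_def c_def by simp
  qed
  have "summable (\<lambda>n. if n \<in> A then a n else 0)"
  proof (rule summable_comparison_test')
    show "summable (\<lambda>n. cmod (x n) powr p / c)"
      using \<open>x \<in> lp p\<close> unfolding lp_def by (simp add: summable_divide)
    show "norm (if n \<in> A then a n else 0) \<le> cmod (x n) powr p / c" for n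
      using on_A[of n] by (simp add: a_def c_def field_simps)
  qed
  moreover have "decseq a"
    unfolding a_def
    by (rule decseq_inverse_powr_norm_prod[OF weights_ge_1]) (use \<open>1 \<le> p\<close> in simp)
  moreover have "0 \<le> a n" for n
    unfolding a_def by simp
  ultimately have "summable a"
    using summable_if_summable_on_positive_density \<open>lower_density A > 0\<close> by blast
  then show False
    using divergent summable_Suc_iff[of a] unfolding a_def by simp
qed

lemma lp_subalgebra_power_mem:
  assumes "lp_subalgebra p A" "x \<in> A" "0 < n"
  shows "(\<lambda>i. x i ^ n) \<in> A"
  using \<open>0 < n\<close>
proof (induction n rule: nat_induct_non_zero)
  case (Suc n)
  then have "(\<lambda>i. x i * x i ^ n) \<in> A"
    using assms(1,2) unfolding lp_subalgebra_def by simp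
  then show ?case by simp
qed (use assms(2) in simp)

lemma no_freq_hypercyclic_algebra_if_powers_not:
  assumes "0 < m" and "\<forall>x\<in>lp p. \<not> freq_hypercyclic p T (\<lambda>i. x i ^ m)"
  shows "\<not> freq_hypercyclic_algebra p T A"
proof
  assume "freq_hypercyclic_algebra p T A"
  then have subalg: "lp_subalgebra p A" and "A \<noteq> {\<lambda>i. 0}"
    and fhc: "\<forall>x\<in>A. x \<noteq> (\<lambda>i. 0) \<longrightarrow> freq_hypercyclic p T x"
    unfolding freq_hypercyclic_algebra_def by auto
  then obtain x where "x \<in> A" and "x \<noteq> (\<lambda>i. 0)"
    unfolding lp_subalgebra_def by blast
  then obtain j where "x j \<noteq> 0" by auto
  then have "(\<lambda>i. x i ^ m) \<noteq> (\<lambda>i. 0)"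
    by (metis power_not_zero)
  moreover have "(\<lambda>i. x i ^ m) \<in> A" and "x \<in> lp p"
    using lp_subalgebra_power_mem[OF subalg \<open>x \<in> A\<close> \<open>0 < m\<close>] subalg \<open>x \<in> A\<close>
    unfolding lp_subalgebra_def by auto
  ultimately show False
    using fhc assms(2) by blast
qed

theorem proposition3p2:
  fixes p :: real and w :: "nat \<Rightarrow> complex" and m :: nat
  assumes "1 \<le> p"
    and "\<exists>C. \<forall>n\<ge>2. cmod (w n) \<le> C"
    and "\<forall>n\<ge>2. w n \<noteq> 0"
    and "\<forall>n\<ge>2. cmod (w n) \<ge> 1"
    and "m \<ge> 2"
    and "\<not> summable (\<lambda>j. 1 / cmod (\<Prod>k\<in>{2..j+2}. w k) powr (p / real m))"
  shows "(\<forall>x\<in>lp p. \<not> freq_hypercyclic p (bshift w) (\<lambda>i. x i ^ m))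
         \<and> \<not> (\<exists>A. freq_hypercyclic_algebra p (bshift w) A)"
proof -
  (* Boundedness of w only makes B_w an operator on l_p, and w n \<noteq> 0 follows from |w n| \<ge> 1. *)
  have "0 < m" using \<open>m \<ge> 2\<close> by simp
  have powers: "\<forall>x\<in>lp p. \<not> freq_hypercyclic p (bshift w) (\<lambda>i. x i ^ m)"
    using power_not_freq_hypercyclic_bshift[OF \<open>1 \<le> p\<close> assms(4) \<open>0 < m\<close> assms(6)] by blast
  then show ?thesis
    using no_freq_hypercyclic_algebra_if_powers_not[OF \<open>0 < m\<close> powers] by blast
qed

end
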